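(* For every $k\ge1$, the element $[c_k,x_2]=c_kx_2-x_2c_k$ does not belong to $S_m$ for any $m\ge1$.
   Context: $K$ is a field of characteristic zero and $K\langle x_2,x_3\rangle$ is the free associative $K$-algebra with unity. $[a,b]=ab-ba$; $c_1=[x_2,x_3]$, $c_{k+1}=[c_k,x_3]$ for $k\ge1$. Let $V$ be the group of automorphisms $\varphi=(x_2+g(x_3),\,x_3+h)$ of $K\langle x_2,x_3\rangle$ with $g\in K\langle x_3\rangle$, $h\in K$, and write $f^\varphi=f(x_2+g(x_3),x_3+h)$. Define $S_1=S=\{f\in K\langle x_2,x_3\rangle\mid f^\varphi=f\ \forall\varphi\in V\}$ and $S_{m+1}=\{f\in K\langle x_2,x_3\rangle\mid f^\varphi-f\in S_m\ \forall\varphi\in V\}$ for $m\ge1$. *)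

theory Defs
  imports Main "HOL-Library.Poly_Mapping"
begin

text \<open>The free associative algebra K<x2,x3> with unity, realised as finitely supported
  K-valued functions on words (lists) over the two-letter alphabet {x2, x3}.\<close>

datatype var = X2 | X3

type_synonym 'k ncpoly = "var list \<Rightarrow>\<^sub>0 'k"

definition ncconst :: "'k::field \<Rightarrow> 'k ncpoly" where
  "ncconst a = Poly_Mapping.single [] a"

definition ncvar :: "var \<Rightarrow> 'k::field ncpoly" where
  "ncvar v = Poly_Mapping.single [v] 1"

definition ncmult :: "'k::field ncpoly \<Rightarrow> 'k ncpoly \<Rightarrow> 'k ncpoly" where
  "ncmult p q = (\<Sum>w\<in>Poly_Mapping.keys p. \<Sum>u\<in>Poly_Mapping.keys q.
                   Poly_Mapping.single (w @ u) (Poly_Mapping.lookup p w * Poly_Mapping.lookup q u))"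

definition nccomm :: "'k::field ncpoly \<Rightarrow> 'k ncpoly \<Rightarrow> 'k ncpoly" where
  "nccomm a b = ncmult a b - ncmult b a"

definition wordval :: "(var \<Rightarrow> 'k::field ncpoly) \<Rightarrow> var list \<Rightarrow> 'k ncpoly" where
  "wordval \<sigma> w = foldr (\<lambda>a r. ncmult (\<sigma> a) r) w (ncconst 1)"

definition ncsubst :: "(var \<Rightarrow> 'k::field ncpoly) \<Rightarrow> 'k ncpoly \<Rightarrow> 'k ncpoly" where
  "ncsubst \<sigma> p = (\<Sum>w\<in>Poly_Mapping.keys p. ncmult (ncconst (Poly_Mapping.lookup p w)) (wordval \<sigma> w))"

definition in_Kx3 :: "'k::field ncpoly \<Rightarrow> bool" where
  "in_Kx3 g \<longleftrightarrow> (\<forall>w\<in>Poly_Mapping.keys g. set w \<subseteq> {X3})"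

text \<open>the group V of automorphisms (x2 + g(x3), x3 + h), represented by their action on generators\<close>
definition Vgrp :: "(var \<Rightarrow> 'k::field ncpoly) set" where
  "Vgrp = {\<sigma>. \<exists>g h. in_Kx3 g \<and>
      \<sigma> = (\<lambda>v. case v of X2 \<Rightarrow> ncvar X2 + g | X3 \<Rightarrow> ncvar X3 + ncconst h)}"

text \<open>c_1 = [x2,x3], c_{k+1} = [c_k, x3] (c 0 is unused)\<close>
fun cc :: "nat \<Rightarrow> 'k::field ncpoly" where
  "cc 0 = 0"
| "cc (Suc 0) = nccomm (ncvar X2) (ncvar X3)"
| "cc (Suc (Suc k)) = nccomm (cc (Suc k)) (ncvar X3)"

text \<open>S_1 = S, S_{m+1} (S 0 is unused)\<close>
fun Sm :: "nat \<Rightarrow> 'k::field ncpoly set" where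
  "Sm 0 = {}"
| "Sm (Suc 0) = {f. \<forall>\<phi>\<in>Vgrp. ncsubst \<phi> f = f}"
| "Sm (Suc (Suc m)) = {f. \<forall>\<phi>\<in>Vgrp. ncsubst \<phi> f - f \<in> Sm (Suc m)}"

end

theory Submission
  imports Defs
begin

(* Let q_m = x3 (x3 - 1) ... (x3 - m + 1) be the falling factorial in x3.
   (1) Every phi in V fixes every c_k: x3 + h differs from x3 by a central constant and
       g(x3) commutes with x3.  Hence for phi = (x2 + q_m, x3) we get
       [c_k, x2]^phi - [c_k, x2] = [c_k, q_m].
   (2) For the shift tau = (x2, x3 + 1) we have q_{n+1}^tau = q_{n+1} + (n+1) q_n, so
       (a [c_k, q_{n+1}])^tau - a [c_k, q_{n+1}] = a (n+1) [c_k, q_n].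
   Setting S_0 = {0}, the definition of S_{m+1} reads "f^phi - f lies in S_m for all phi".
   Descending with tau from [c_k, q_m] in S_{m-1} we would reach a nonzero multiple of
   [c_k, q_1] = c_{k+1} in S_0 = {0}; but c_{k+1} is nonzero (its coefficient at
   x2 x3^(k+1) is 1), and multiples by positive integers are nonzero in characteristic 0.
   The file first turns K<x2,x3> into a ring (words form a monoid under concatenation),
   shows that substitution is a ring endomorphism, and then carries out (1), (2) and the
   descent; the theorem itself is the final short combination. *)

(* Words form a monoid under concatenation, which makes var list =>0 'k the monoid ring of
   the free monoid, i.e. the free associative algebra, with the library's ring structure. *)

instantiation list :: (type) monoid_add
begin
definition zero_list :: "'a list" where "zero_list = []"
definition plus_list :: "'a list \<Rightarrow> 'a list \<Rightarrow> 'a list" where "plus_list xs ys = xs @ ys"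
instance by standard (auto simp: zero_list_def plus_list_def)
end

lemma zero_list_eq [simp]: "(0::'a list) = []"
  by (simp add: zero_list_def)

lemma plus_list_eq [simp]: "(xs::'a list) + ys = xs @ ys"
  by (simp add: plus_list_def)

lemma single_mult_single:
  "Poly_Mapping.single w a * Poly_Mapping.single u b = Poly_Mapping.single (w @ u) (a * b :: 'k::field)"
  by (simp add: mult_single)

lemma poly_mapping_expansion:
  "p = (\<Sum>w\<in>Poly_Mapping.keys p. Poly_Mapping.single w (Poly_Mapping.lookup p w))"
  by (rule poly_mapping_eqI)
     (simp add: lookup_sum lookup_single when_def in_keys_iff sum.delta)

lemma ncmult_eq_times: "ncmult p q = p * (q :: 'k::field ncpoly)"
proof -
  have "ncmult p q = (\<Sum>w\<in>Poly_Mapping.keys p. \<Sum>u\<in>Poly_Mapping.keys q.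
     Poly_Mapping.single w (Poly_Mapping.lookup p w) * Poly_Mapping.single u (Poly_Mapping.lookup q u))"
    by (simp add: ncmult_def single_mult_single)
  also have "\<dots> = (\<Sum>w\<in>Poly_Mapping.keys p. Poly_Mapping.single w (Poly_Mapping.lookup p w)) *
      (\<Sum>u\<in>Poly_Mapping.keys q. Poly_Mapping.single u (Poly_Mapping.lookup q u))"
    by (simp only: sum_distrib_right) (simp only: sum_distrib_left)
  also have "\<dots> = p * q"
    by (simp flip: poly_mapping_expansion)
  finally show ?thesis .
qed

lemma one_ncpoly: "(1::'k::field ncpoly) = Poly_Mapping.single [] 1"
  using single_one[where 'a = "var list"] by simp

lemma lookup_scalar_mult:
  "Poly_Mapping.lookup (Poly_Mapping.single [] s * p) w = s * Poly_Mapping.lookup p w"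
  for s :: "'k::field"
proof -
  have "Poly_Mapping.single [] s * p = Poly_Mapping.map ((*) s) p"
    using mult_map_scale_conv_mult[of s p] by simp
  then show ?thesis
    by (simp add: Poly_Mapping.map.rep_eq when_def)
qed

lemma scalar_central: "Poly_Mapping.single [] s * p = p * (Poly_Mapping.single [] s :: 'k::field ncpoly)"
  by (subst (2 4) poly_mapping_expansion)
     (simp add: sum_distrib_left sum_distrib_right single_mult_single mult.commute)

lemma wordval_eq_prod_list: "wordval \<sigma> w = prod_list (map \<sigma> w)"
  by (induction w) (simp_all add: wordval_def ncmult_eq_times ncconst_def flip: one_ncpoly)

lemma ncsubst_eq:
  "ncsubst \<sigma> p = (\<Sum>w\<in>Poly_Mapping.keys p.
      Poly_Mapping.single [] (Poly_Mapping.lookup p w) * prod_list (map \<sigma> w))"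
  by (simp add: ncsubst_def ncmult_eq_times ncconst_def wordval_eq_prod_list)

lemma ncsubst_eq_superset:
  assumes "finite A" "Poly_Mapping.keys p \<subseteq> A"
  shows "ncsubst \<sigma> p = (\<Sum>w\<in>A.
      Poly_Mapping.single [] (Poly_Mapping.lookup p w) * prod_list (map \<sigma> w))"
  unfolding ncsubst_eq
  by (rule sum.mono_neutral_left) (use assms in \<open>auto simp: in_keys_iff\<close>)

lemma ncsubst_single:
  "ncsubst \<sigma> (Poly_Mapping.single w a) = Poly_Mapping.single [] a * prod_list (map \<sigma> w)"
  by (subst ncsubst_eq_superset[of "{w}"]) auto

lemma ncsubst_zero [simp]: "ncsubst \<sigma> 0 = 0"
  by (simp add: ncsubst_eq)

lemma ncsubst_add [simp]: "ncsubst \<sigma> (p + q) = ncsubst \<sigma> p + ncsubst \<sigma> q"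
proof -
  let ?A = "Poly_Mapping.keys p \<union> Poly_Mapping.keys q"
  have "finite ?A" and "Poly_Mapping.keys (p + q) \<subseteq> ?A"
    by (simp_all add: keys_add)
  then show ?thesis
    by (simp add: ncsubst_eq_superset[of ?A] lookup_add single_add distrib_right sum.distrib)
qed

lemma ncsubst_diff [simp]: "ncsubst \<sigma> (p - q) = ncsubst \<sigma> p - ncsubst \<sigma> q"
  by (metis add_diff_cancel ncsubst_add diff_add_cancel)

lemma ncsubst_sum: "ncsubst \<sigma> (\<Sum>i\<in>I. f i) = (\<Sum>i\<in>I. ncsubst \<sigma> (f i))"
  by (induction I rule: infinite_finite_induct) simp_all

(* Multiplicativity on monomials; it uses that scalars are central. *)
lemma ncsubst_single_append:
  "ncsubst \<sigma> (Poly_Mapping.single (w @ u) (a * b)) =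
     ncsubst \<sigma> (Poly_Mapping.single w a) * ncsubst \<sigma> (Poly_Mapping.single u b)"
proof -
  have "ncsubst \<sigma> (Poly_Mapping.single (w @ u) (a * b)) =
      Poly_Mapping.single [] a * (Poly_Mapping.single [] b * prod_list (map \<sigma> w)) * prod_list (map \<sigma> u)"
    by (simp add: ncsubst_single mult.assoc flip: single_mult_single[of "[]" _ "[]", simplified])
  also have "\<dots> = ncsubst \<sigma> (Poly_Mapping.single w a) * ncsubst \<sigma> (Poly_Mapping.single u b)"
    by (simp only: ncsubst_single scalar_central[of b] mult.assoc)
  finally show ?thesis .
qed

lemma ncsubst_mult [simp]: "ncsubst \<sigma> (p * q) = ncsubst \<sigma> p * ncsubst \<sigma> q"
proof -
  have "ncsubst \<sigma> (p * q) = (\<Sum>w\<in>Poly_Mapping.keys p. \<Sum>u\<in>Poly_Mapping.keys q.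
      ncsubst \<sigma> (Poly_Mapping.single (w @ u) (Poly_Mapping.lookup p w * Poly_Mapping.lookup q u)))"
    by (simp add: ncsubst_sum ncmult_def flip: ncmult_eq_times)
  also have "\<dots> = (\<Sum>w\<in>Poly_Mapping.keys p. ncsubst \<sigma> (Poly_Mapping.single w (Poly_Mapping.lookup p w))) *
      (\<Sum>u\<in>Poly_Mapping.keys q. ncsubst \<sigma> (Poly_Mapping.single u (Poly_Mapping.lookup q u)))"
    by (simp only: ncsubst_single_append sum_distrib_right) (simp only: sum_distrib_left)
  also have "\<dots> = ncsubst \<sigma> p * ncsubst \<sigma> q"
    by (simp flip: ncsubst_sum poly_mapping_expansion)
  finally show ?thesis .
qed

lemma ncsubst_scalar [simp]: "ncsubst \<sigma> (Poly_Mapping.single [] c) = Poly_Mapping.single [] c"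
  by (simp add: ncsubst_single)

lemma scalar_of_nat: "Poly_Mapping.single [] (of_nat n) = (of_nat n :: 'k::field ncpoly)"
  using single_of_nat[where 'a = "var list"] by simp

lemma ncsubst_of_nat [simp]: "ncsubst \<sigma> (of_nat n) = of_nat n"
  by (metis ncsubst_scalar scalar_of_nat)

lemma ncsubst_one [simp]: "ncsubst \<sigma> 1 = 1"
  using ncsubst_of_nat[of \<sigma> 1] by simp

lemma ncsubst_var [simp]: "ncsubst \<sigma> (ncvar v) = \<sigma> v"
  by (simp add: ncvar_def ncsubst_single flip: one_ncpoly)


lemma nccomm_eq: "nccomm a b = a * b - b * a"
  by (simp add: nccomm_def ncmult_eq_times)

lemma ncsubst_comm [simp]: "ncsubst \<sigma> (nccomm a b) = nccomm (ncsubst \<sigma> a) (ncsubst \<sigma> b)"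
  by (simp add: nccomm_eq)

lemma nccomm_add_of_nat_right:
  "nccomm c (q + of_nat m * r) = nccomm c q + of_nat m * nccomm c (r :: 'k::field ncpoly)"
proof -
  have "c * (of_nat m * r) = of_nat m * (c * r)"
    by (metis mult.assoc mult_of_nat_commute)
  then show ?thesis
    by (simp add: nccomm_eq algebra_simps)
qed

(* Elements of K<x3> commute with x3: each of their words is a power of x3. *)
lemma in_Kx3_commutes_x3:
  assumes "in_Kx3 g"
  shows "g * ncvar X3 = ncvar X3 * g"
proof -
  have "w @ [X3] = X3 # w" if "w \<in> Poly_Mapping.keys g" for w
  proof -
    have "w = replicate (length w) X3"
      using assms that unfolding in_Kx3_def by (metis empty_iff insert_iff replicate_length_same subsetD)
    then show ?thesis by (metis replicate_append_same)
  qed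
  then have "(\<Sum>w\<in>Poly_Mapping.keys g. Poly_Mapping.single (w @ [X3]) (Poly_Mapping.lookup g w)) =
      (\<Sum>w\<in>Poly_Mapping.keys g. Poly_Mapping.single (X3 # w) (Poly_Mapping.lookup g w))"
    by (simp cong: sum.cong)
  then show ?thesis
    by (subst (1 3) poly_mapping_expansion) (simp add: ncvar_def sum_distrib_left sum_distrib_right single_mult_single)
qed

definition vmap :: "'k::field ncpoly \<Rightarrow> 'k \<Rightarrow> var \<Rightarrow> 'k ncpoly" where
  "vmap g h = (\<lambda>v. case v of X2 \<Rightarrow> ncvar X2 + g | X3 \<Rightarrow> ncvar X3 + ncconst h)"

lemma vmap_X2 [simp]: "vmap g h X2 = ncvar X2 + g"
  and vmap_X3 [simp]: "vmap g h X3 = ncvar X3 + ncconst h"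
  by (simp_all add: vmap_def)

lemma Vgrp_eq: "Vgrp = {vmap g h | g h. in_Kx3 g}"
  by (auto simp: Vgrp_def vmap_def)

lemma vmap_in_Vgrp: "in_Kx3 g \<Longrightarrow> vmap g h \<in> Vgrp"
  by (auto simp: Vgrp_eq)

(* Step (1): every element of V fixes every c_k, since translating x3 by a constant does not
   change commutators with x3, and [g(x3), x3] = 0. *)

lemma cc_fixed_by_Vgrp:
  assumes "\<sigma> \<in> Vgrp"
  shows "ncsubst \<sigma> (cc k) = cc k"
proof -
  obtain g h where \<sigma>: "\<sigma> = vmap g h" and g: "in_Kx3 g"
    using assms by (auto simp: Vgrp_eq)
  have "nccomm p (ncvar X3 + ncconst h) = nccomm p (ncvar X3)" for p
    by (simp add: nccomm_eq algebra_simps ncconst_def scalar_central)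
  moreover have "nccomm g (ncvar X3) = 0"
    using in_Kx3_commutes_x3[OF g] by (simp add: nccomm_eq)
  ultimately show ?thesis
    by (induction k rule: cc.induct) (simp_all add: \<sigma> nccomm_eq algebra_simps)
qed

lemma lookup_times_var:
  "Poly_Mapping.lookup (p * ncvar v) (w @ [v]) = Poly_Mapping.lookup p w"
  by (subst poly_mapping_expansion)
     (simp add: ncvar_def sum_distrib_right single_mult_single lookup_sum lookup_single when_def
       sum.delta in_keys_iff)

lemma lookup_var_times_other:
  assumes "v \<noteq> v'"
  shows "Poly_Mapping.lookup (ncvar v * p) (v' # w) = 0"
  by (subst poly_mapping_expansion)
     (use assms in \<open>simp add: ncvar_def sum_distrib_left single_mult_single lookup_sum lookup_single when_def\<close>)

lemma cc_Suc: "k \<ge> 1 \<Longrightarrow> cc (Suc k) = nccomm (cc k) (ncvar X3)"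
  by (cases k) simp_all

lemma cc_leading_coeff:
  assumes "k \<ge> 1"
  shows "Poly_Mapping.lookup (cc k :: 'k::field ncpoly) (X2 # replicate k X3) = 1"
  using assms
proof (induction k rule: cc.induct)
  case 2
  show ?case
    by (simp add: nccomm_eq ncvar_def single_mult_single lookup_minus lookup_single)
next
  case (3 k)
  have "X2 # replicate (Suc (Suc k)) X3 = (X2 # replicate (Suc k) X3) @ [X3]"
    by (simp add: replicate_append_same)
  then show ?case
    using 3 lookup_times_var[of "cc (Suc k) :: 'k ncpoly" X3 "X2 # replicate (Suc k) X3"]
      lookup_var_times_other[of X3 X2 "cc (Suc k) :: 'k ncpoly" "replicate (Suc k) X3 @ [X3]"]
    by (simp add: nccomm_eq lookup_minus del: replicate_Suc)
qed simp

lemma cc_nonzero: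
  assumes "k \<ge> 1"
  shows "(cc k :: 'k::field ncpoly) \<noteq> 0"
  using cc_leading_coeff[OF assms, where 'k = 'k] by force

fun falling :: "nat \<Rightarrow> 'k::field ncpoly" where
  "falling 0 = 1"
| "falling (Suc n) = falling n * (ncvar X3 - of_nat n)"

lemma in_Kx3_scalar: "in_Kx3 (Poly_Mapping.single [] c)"
  by (simp add: in_Kx3_def)

lemma in_Kx3_diff: "in_Kx3 p \<Longrightarrow> in_Kx3 q \<Longrightarrow> in_Kx3 (p - q)"
  unfolding in_Kx3_def using keys_diff[of p q] by blast

lemma in_Kx3_mult: "in_Kx3 p \<Longrightarrow> in_Kx3 q \<Longrightarrow> in_Kx3 (p * q)"
  unfolding in_Kx3_def using keys_mult[of p q] by fastforce

lemma in_Kx3_falling: "in_Kx3 (falling n :: 'k::field ncpoly)"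
proof (induction n)
  case 0
  show ?case using in_Kx3_scalar[of 1] by (simp flip: one_ncpoly)
next
  case (Suc n)
  have "in_Kx3 (ncvar X3 :: 'k ncpoly)" by (simp add: in_Kx3_def ncvar_def)
  moreover have "in_Kx3 (of_nat n :: 'k ncpoly)"
    using in_Kx3_scalar[of "of_nat n :: 'k"] by (simp add: scalar_of_nat)
  ultimately show ?case
    using Suc by (simp add: in_Kx3_mult in_Kx3_diff)
qed

lemma falling_shift:
  fixes \<sigma> :: "var \<Rightarrow> 'k::field ncpoly"
  assumes "\<sigma> X3 = ncvar X3 + 1"
  shows "ncsubst \<sigma> (falling (Suc n)) = falling (Suc n) + of_nat (Suc n) * falling n"
proof (induction n)
  case 0
  show ?case by (simp add: assms)
next
  case (Suc n)
  have shift: "ncvar X3 + 1 - of_nat (Suc n) = ncvar X3 - (of_nat n :: 'k ncpoly)"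
    by simp
  have step: "falling (Suc n) * (ncvar X3 - of_nat n) = falling (Suc (Suc n)) + (falling (Suc n) :: 'k ncpoly)"
    by (simp only: falling.simps(2)[of "Suc n"]) (simp add: algebra_simps del: falling.simps)
  have "ncsubst \<sigma> (falling (Suc (Suc n))) =
      (falling (Suc n) + of_nat (Suc n) * falling n) * (ncvar X3 - of_nat n)"
    by (simp only: falling.simps(2)[of "Suc n"] ncsubst_mult ncsubst_diff ncsubst_var ncsubst_of_nat
        assms Suc.IH shift)
  also have "\<dots> = falling (Suc n) * (ncvar X3 - of_nat n) + of_nat (Suc n) * falling (Suc n)"
    by (simp only: distrib_right mult.assoc falling.simps(2)[of n])
  also have "\<dots> = falling (Suc (Suc n)) + of_nat (Suc (Suc n)) * falling (Suc n)"
    by (simp only: step) (simp add: algebra_simps del: falling.simps)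
  finally show ?case .
qed

lemma of_nat_mult_eq_zero:
  assumes "of_nat a * p = (0 :: 'k::field_char_0 ncpoly)" and "a > 0"
  shows "p = 0"
proof (rule poly_mapping_eqI)
  fix w
  have "of_nat a * Poly_Mapping.lookup p w = 0"
    using assms(1) lookup_scalar_mult[of "of_nat a" p w] by (simp add: scalar_of_nat)
  then show "Poly_Mapping.lookup p w = Poly_Mapping.lookup 0 w"
    using assms(2) by simp
qed

(* The sets S_m extended by S_0 = {0}, so that the recursion defining S_{m+1} also holds
   for m = 0. *)
definition Sfilt :: "nat \<Rightarrow> 'k::field ncpoly set" where
  "Sfilt n = (if n = 0 then {0} else Sm n)"

lemma Sfilt_step: "p \<in> Sfilt (Suc n) \<Longrightarrow> \<sigma> \<in> Vgrp \<Longrightarrow> ncsubst \<sigma> p - p \<in> Sfilt n"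
  by (cases n) (auto simp: Sfilt_def)

(* Applying the
   shift lowers n by one and multiplies by n+1; at n = 0 we reach a nonzero multiple of
   c_{k+1}, which is not in S_0 = {0}. *)
lemma comm_falling_notin_Sfilt:
  fixes k n a :: nat
  assumes "k \<ge> 1" and "a > 0"
  shows "of_nat a * nccomm (cc k) (falling (Suc n)) \<notin> (Sfilt n :: 'k::field_char_0 ncpoly set)"
  using assms(2)
proof (induction n arbitrary: a)
  case 0
  have "(cc (Suc k) :: 'k ncpoly) \<noteq> 0"
    by (rule cc_nonzero) simp
  then show ?case
    using 0 of_nat_mult_eq_zero[of a "cc (Suc k) :: 'k ncpoly"]
    by (auto simp: Sfilt_def cc_Suc[OF assms(1)])
next
  case (Suc n)
  let ?\<tau> = "vmap 0 1 :: var \<Rightarrow> 'k ncpoly"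
  let ?c = "nccomm (cc k) (falling (Suc (Suc n)) :: 'k ncpoly)"
  have \<tau>: "?\<tau> \<in> Vgrp"
    by (rule vmap_in_Vgrp) (simp add: in_Kx3_def)
  have \<tau>_X3: "?\<tau> X3 = ncvar X3 + 1"
    by (simp add: ncconst_def flip: one_ncpoly)
  have "ncsubst ?\<tau> (of_nat a * ?c) =
      of_nat a * nccomm (cc k) (falling (Suc (Suc n)) + of_nat (Suc (Suc n)) * falling (Suc n))"
    by (simp only: ncsubst_mult ncsubst_of_nat ncsubst_comm cc_fixed_by_Vgrp[OF \<tau>]
        falling_shift[of ?\<tau>, OF \<tau>_X3])
  also have "\<dots> = of_nat a * ?c + of_nat (a * Suc (Suc n)) * nccomm (cc k) (falling (Suc n))"
    by (simp only: nccomm_add_of_nat_right distrib_left of_nat_mult mult.assoc)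
  finally have "ncsubst ?\<tau> (of_nat a * ?c) - of_nat a * ?c =
      of_nat (a * Suc (Suc n)) * nccomm (cc k) (falling (Suc n))"
    by simp
  then show ?case
    using Sfilt_step[OF _ \<tau>, of "of_nat a * ?c" n] Suc.IH[of "a * Suc (Suc n)"] Suc.prems
    by auto
qed

(* The translation (x2 + q_m, x3) in V moves [c_k, x2] by [c_k, q_m], which by the descent
   is not in S_{m-1}. *)
theorem proposition1:
  fixes k m :: nat
  assumes "k \<ge> 1" and "m \<ge> 1"
  shows "nccomm (cc k :: 'k::field_char_0 ncpoly) (ncvar X2) \<notin> Sm m"
proof
  assume in_Sm: "nccomm (cc k :: 'k ncpoly) (ncvar X2) \<in> Sm m"
  obtain n where m: "m = Suc n"
    using assms(2) by (cases m) auto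
  let ?\<phi> = "vmap (falling (Suc n)) 0 :: var \<Rightarrow> 'k ncpoly"
  let ?f = "nccomm (cc k :: 'k ncpoly) (ncvar X2)"
  have \<phi>: "?\<phi> \<in> Vgrp"
    by (rule vmap_in_Vgrp) (rule in_Kx3_falling)
  have "ncsubst ?\<phi> ?f - ?f \<in> Sfilt n"
    using Sfilt_step[OF _ \<phi>, of ?f n] in_Sm m by (simp add: Sfilt_def)
  moreover have "ncsubst ?\<phi> ?f - ?f = of_nat 1 * nccomm (cc k) (falling (Suc n))"
    using cc_fixed_by_Vgrp[OF \<phi>] by (simp add: nccomm_eq algebra_simps ncconst_def)
  ultimately show False
    using comm_falling_notin_Sfilt[OF assms(1), of 1 n, where 'k = 'k] by simp
qed

end
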